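(* Under the standing setup, assume that $f$ is bounded, i.e. $\sup_{q\in\mathcal P}\|f_q\|_\infty<\infty$. Then for all $u_0\in\mathbb R^d$, $\Big\|\frac{\mathscr S(h)u_0-u_0}{h}-\mathcal Qu_0\Big\|_\infty\to0$ as $h\searrow0$.
   Context: Standing setup: $d\in\mathbb N$; vectors in $\mathbb R^d$ with $\|u\|_\infty=\max_i|u_i|$; inequalities and suprema of vectors are componentwise; reals are identified with constant vectors. A $Q$-matrix is $q\in\mathbb R^{d\times d}$ with $q_{ii}\le0$, $q_{ij}\ge0$ ($i\ne j$), $\sum_jq_{ij}=0$. Let $\mathcal P$ be a set of $Q$-matrices and $f=(f_q)_{q\in\mathcal P}\subset\mathbb R^d$ with $\sup_{q\in\mathcal P}f_q=f_{q_0}=0$ for some $q_0\in\mathcal P$, such that $\mathcal Qu:=\sup_{q\in\mathcal P}(qu+f_q)$ is finite for every $u\in\mathbb R^d$. For $q\in\mathcal P$, $t\ge0$: $S_q(t)u_0:=e^{tq}u_0+\int_0^te^{sq}f_q\,ds$. For $h\ge0$: $\mathcal E_hu_0:=\sup_{q\in\mathcal P}S_q(h)u_0$. $P$ is the set of finite subsets $\pi\subset[0,\infty)$ with $0\in\pi$; $P_t:=\{\pi\in P:\max\pi=t\}$. For $\pi=\{t_0,\dots,t_m\}$ with $0=t_0<\dots<t_m$, $m\ge1$, $\mathcal E_\pi:=\mathcal E_{t_1-t_0}\circ\cdots\circ\mathcal E_{t_m-t_{m-1}}$, and $\mathcal E_{\{0\}}:=\mathcal E_0$. The Nisio semigroup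 of $(\mathcal P,f)$ is $\mathscr S(t)u_0:=\sup_{\pi\in P_t}\mathcal E_\pi u_0$. *)

theory Defs
  imports "HOL-Analysis.Analysis"
begin

text \<open>Vectors in R^d are elements of real^'d (d = CARD('d)), d x d matrices are real^'d^'d.\<close>

definition norm_inf :: "real ^ 'd \<Rightarrow> real" where
  "norm_inf u = Max (range (\<lambda>i. \<bar>u $ i\<bar>))"

definition is_Q_matrix :: "real ^ 'd ^ 'd \<Rightarrow> bool" where
  "is_Q_matrix q \<longleftrightarrow> (\<forall>i. q $ i $ i \<le> 0) \<and> (\<forall>i j. i \<noteq> j \<longrightarrow> q $ i $ j \<ge> 0)
     \<and> (\<forall>i. (\<Sum>j\<in>UNIV. q $ i $ j) = 0)"

fun mat_pow :: "real ^ 'd ^ 'd \<Rightarrow> nat \<Rightarrow> real ^ 'd ^ 'd" where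
  "mat_pow A 0 = mat 1"
| "mat_pow A (Suc n) = A ** mat_pow A n"

definition mat_exp :: "real ^ 'd ^ 'd \<Rightarrow> real ^ 'd ^ 'd" where
  "mat_exp A = (\<Sum>n. (1 / fact n :: real) *\<^sub>R mat_pow A n)"

definition S_q :: "real ^ 'd ^ 'd \<Rightarrow> real ^ 'd \<Rightarrow> real \<Rightarrow> real ^ 'd \<Rightarrow> real ^ 'd" where
  "S_q q fq t u0 = mat_exp (t *\<^sub>R q) *v u0 + integral {0..t} (\<lambda>s. mat_exp (s *\<^sub>R q) *v fq)"

definition vsup :: "'a set \<Rightarrow> ('a \<Rightarrow> real ^ 'd) \<Rightarrow> real ^ 'd" where
  "vsup A g = (\<chi> i. SUP a\<in>A. g a $ i)"

definition genQ :: "(real ^ 'd ^ 'd) set \<Rightarrow> (real ^ 'd ^ 'd \<Rightarrow> real ^ 'd) \<Rightarrow> real ^ 'd \<Rightarrow> real ^ 'd" where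
  "genQ P f u = vsup P (\<lambda>q. q *v u + f q)"

definition E_h :: "(real ^ 'd ^ 'd) set \<Rightarrow> (real ^ 'd ^ 'd \<Rightarrow> real ^ 'd) \<Rightarrow> real \<Rightarrow> real ^ 'd \<Rightarrow> real ^ 'd" where
  "E_h P f h u0 = vsup P (\<lambda>q. S_q q (f q) h u0)"

definition partitions_upto :: "real \<Rightarrow> real set set" where
  "partitions_upto t = {\<pi>. finite \<pi> \<and> 0 \<in> \<pi> \<and> (\<forall>s\<in>\<pi>. 0 \<le> s) \<and> Max \<pi> = t}"

text \<open>For \<pi> = {t0 < ... < tm}, m \<ge> 1: \<E>_\<pi> = \<E>_{t1-t0} \<circ> ... \<circ> \<E>_{tm-t_{m-1}};
  \<E>_{{0}} = \<E>_0.\<close>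
definition E_part :: "(real ^ 'd ^ 'd) set \<Rightarrow> (real ^ 'd ^ 'd \<Rightarrow> real ^ 'd) \<Rightarrow> real set \<Rightarrow> real ^ 'd \<Rightarrow> real ^ 'd" where
  "E_part P f \<pi> u0 =
    (if \<pi> = {0} then E_h P f 0 u0
     else (let ts = sorted_list_of_set \<pi>;
               hs = map2 (\<lambda>a b. b - a) ts (tl ts)
           in foldr (\<lambda>h g. E_h P f h \<circ> g) hs id u0))"

definition nisio :: "(real ^ 'd ^ 'd) set \<Rightarrow> (real ^ 'd ^ 'd \<Rightarrow> real ^ 'd) \<Rightarrow> real \<Rightarrow> real ^ 'd \<Rightarrow> real ^ 'd" where
  "nisio P f t u0 = vsup (partitions_upto t) (\<lambda>\<pi>. E_part P f \<pi> u0)"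

end

theory Submission
  imports Defs
begin

text \<open>If all q \<in> P have entries bounded by K and all
  f q are bounded by F, then S_q(s) w = w + s (q w + f q) + O(s^2) uniformly in q, so a single step
  of E_s raises w by at most s (Q u + K |w - u|) + O(s^2). Along any partition of [0, h] the
  iterates stay within O(h) of u, hence the drift terms add up to O(h^2) and
  E_\<pi> u \<le> u + h Q u + O(h^2); the supremum over partitions bounds S(h) u from above. From below,
  S(h) u \<ge> E_h u \<ge> S_q(h) u \<ge> u + h (q u + f q) - O(h^2) for every q. So the difference
  quotient is within O(h) of Q u.\<close>

lemma abs_component_le_norm_inf: "\<bar>v $ i\<bar> \<le> norm_inf v"
  unfolding norm_inf_def by (rule Max_ge) auto

lemma norm_inf_nonneg: "0 \<le> norm_inf v"
  using abs_ge_zero abs_component_le_norm_inf by (rule order_trans)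

lemma norm_inf_le: "(\<And>i. \<bar>v $ i\<bar> \<le> c) \<Longrightarrow> norm_inf v \<le> c"
  unfolding norm_inf_def by (subst Max_le_iff) auto

definition l1norm :: "real ^ 'd \<Rightarrow> real" where
  "l1norm v = (\<Sum>i\<in>UNIV. \<bar>v $ i\<bar>)"

definition mat_l1norm :: "real ^ 'd ^ 'd \<Rightarrow> real" where
  "mat_l1norm A = (\<Sum>i\<in>UNIV. \<Sum>j\<in>UNIV. \<bar>A $ i $ j\<bar>)"

lemma l1norm_nonneg: "0 \<le> l1norm v"
  unfolding l1norm_def by (simp add: sum_nonneg)

lemma mat_l1norm_nonneg: "0 \<le> mat_l1norm A"
  unfolding mat_l1norm_def by (simp add: sum_nonneg)

lemma abs_component_le_l1norm: "\<bar>v $ i\<bar> \<le> l1norm v"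
  unfolding l1norm_def by (rule member_le_sum) auto

lemma norm_le_l1norm: "norm v \<le> l1norm v"
  unfolding l1norm_def by (rule norm_le_l1_cart)

lemma l1norm_triangle: "l1norm (v + w) \<le> l1norm v + l1norm w"
  unfolding l1norm_def by (simp add: sum.distrib[symmetric] sum_mono abs_triangle_ineq)

lemma l1norm_le_card_norm_inf: "l1norm v \<le> real CARD('d) * norm_inf (v :: real ^ 'd)"
proof -
  have "l1norm v \<le> (\<Sum>i\<in>(UNIV::'d set). norm_inf v)"
    unfolding l1norm_def by (intro sum_mono abs_component_le_norm_inf)
  then show ?thesis by simp
qed

lemma l1norm_mult_vec: "l1norm (A *v v) \<le> mat_l1norm A * l1norm v"
proof -
  have "\<bar>(A *v v) $ i\<bar> \<le> (\<Sum>j\<in>UNIV. \<bar>A$i$j\<bar> * l1norm v)" for i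
  proof -
    have "\<bar>(A *v v) $ i\<bar> \<le> (\<Sum>j\<in>UNIV. \<bar>A$i$j * v$j\<bar>)"
      unfolding matrix_vector_mult_def by (simp add: sum_abs)
    also have "\<dots> \<le> (\<Sum>j\<in>UNIV. \<bar>A$i$j\<bar> * l1norm v)"
      by (rule sum_mono) (simp add: abs_mult mult_left_mono abs_component_le_l1norm)
    finally show ?thesis .
  qed
  then have "l1norm (A *v v) \<le> (\<Sum>i\<in>UNIV. \<Sum>j\<in>UNIV. \<bar>A$i$j\<bar> * l1norm v)"
    unfolding l1norm_def by (rule sum_mono)
  then show ?thesis
    unfolding mat_l1norm_def by (simp add: sum_distrib_right)
qed

lemma l1norm_mat_pow_mult_vec: "l1norm (mat_pow A n *v v) \<le> mat_l1norm A ^ n * l1norm v"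
proof (induction n)
  case (Suc n)
  have "l1norm (mat_pow A (Suc n) *v v) \<le> mat_l1norm A * l1norm (mat_pow A n *v v)"
    by (simp add: matrix_vector_mul_assoc[symmetric] l1norm_mult_vec)
  also have "\<dots> \<le> mat_l1norm A * (mat_l1norm A ^ n * l1norm v)"
    using Suc mat_l1norm_nonneg by (rule mult_left_mono)
  finally show ?case by simp
qed simp

lemma norm_mat_pow_mult_vec_le: "norm (mat_pow A n *v v) \<le> mat_l1norm A ^ n * l1norm v"
  using norm_le_l1norm l1norm_mat_pow_mult_vec by (rule order_trans)

lemma norm_mat_pow_le: "norm (mat_pow A n) \<le> real (CARD('d) * CARD('d)) * mat_l1norm (A :: real^'d^'d) ^ n"
proof -
  have entry: "\<bar>mat_pow A n $ i $ j\<bar> \<le> mat_l1norm A ^ n" for i j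
  proof -
    have "\<bar>mat_pow A n $ i $ j\<bar> = \<bar>(mat_pow A n *v axis j 1) $ i\<bar>"
      by (simp add: matrix_vector_mult_basis column_def)
    also have "\<dots> \<le> mat_l1norm A ^ n * l1norm (axis j (1::real))"
      using abs_component_le_l1norm l1norm_mat_pow_mult_vec by (rule order_trans)
    also have "l1norm (axis j (1::real)) = 1"
      unfolding l1norm_def axis_def by (simp add: if_distrib cong: if_cong)
    finally show ?thesis by simp
  qed
  have "norm (mat_pow A n) \<le> (\<Sum>i\<in>UNIV. norm (mat_pow A n $ i))"
    by (simp add: norm_vec_def L2_set_le_sum)
  also have "\<dots> \<le> (\<Sum>i\<in>UNIV. \<Sum>j\<in>UNIV. \<bar>mat_pow A n $ i $ j\<bar>)"
    by (rule sum_mono) (rule norm_le_l1_cart)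
  also have "\<dots> \<le> (\<Sum>i\<in>(UNIV::'d set). \<Sum>j\<in>(UNIV::'d set). mat_l1norm A ^ n)"
    by (intro sum_mono entry)
  finally show ?thesis by simp
qed

section \<open>The matrix exponential and the semigroups S_q\<close>

lemma mat_pow_scaleR: "mat_pow (t *\<^sub>R A) n = (t ^ n) *\<^sub>R mat_pow A n"
  by (induction n) (simp_all add: matrix_matrix_mult_def vec_eq_iff sum_distrib_left mult_ac)

lemma exp_series_sums: "(\<lambda>n. (x::real) ^ n / fact n) sums exp x"
  using exp_converges[of x] by (simp add: divide_inverse_commute)

lemma summable_mat_exp_series: "summable (\<lambda>n. (1 / fact n :: real) *\<^sub>R mat_pow (A::real^'d^'d) n)"
proof (rule summable_comparison_test)
  let ?c = "real (CARD('d) * CARD('d))"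
  have "norm ((1 / fact n :: real) *\<^sub>R mat_pow A n) \<le> ?c * (mat_l1norm A ^ n / fact n)" for n
    using mult_left_mono[OF norm_mat_pow_le, of "1 / fact n" A n] by simp
  then show "\<exists>N. \<forall>n\<ge>N. norm ((1 / fact n :: real) *\<^sub>R mat_pow A n) \<le> ?c * (mat_l1norm A ^ n / fact n)"
    by blast
  show "summable (\<lambda>n. ?c * (mat_l1norm A ^ n / fact n))"
    using exp_series_sums by (intro summable_mult sums_summable)
qed

lemma bounded_linear_mult_vec_left: "bounded_linear (\<lambda>A::real^'n^'m. A *v v)"
  by (rule linear_conv_bounded_linear[THEN iffD1], rule linearI)
    (simp_all add: matrix_vector_mult_def vec_eq_iff sum.distrib sum_distrib_left distrib_right mult.assoc)

lemma mat_exp_mult_vec_sums: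
  "(\<lambda>n. (t ^ n / fact n) *\<^sub>R (mat_pow A n *v v)) sums (mat_exp (t *\<^sub>R A) *v v)"
proof -
  have "(\<lambda>n. (1 / fact n :: real) *\<^sub>R mat_pow (t *\<^sub>R A) n) sums mat_exp (t *\<^sub>R A)"
    unfolding mat_exp_def by (rule summable_sums[OF summable_mat_exp_series])
  from bounded_linear.sums[OF bounded_linear_mult_vec_left this]
  show ?thesis
    by (simp add: mat_pow_scaleR scaleR_matrix_vector_assoc)
qed

lemma mat_exp_mult_vec_remainder:
  assumes t: "0 \<le> t" "t \<le> 1" and K: "mat_l1norm A \<le> K"
  shows "norm (mat_exp (t *\<^sub>R A) *v v - (\<Sum>n<m. (t ^ n / fact n) *\<^sub>R (mat_pow A n *v v)))
           \<le> t ^ m * K ^ m * l1norm v * exp K"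
proof -
  define a where "a n = (t ^ n / fact n) *\<^sub>R (mat_pow A n *v v)" for n
  have K0: "0 \<le> K" using K mat_l1norm_nonneg order_trans by blast
  have a_le: "norm (a (n + m)) \<le> (t ^ m * K ^ m * l1norm v) * (K ^ n / fact n)" for n
  proof -
    have "norm (a (n + m)) = (t ^ (n + m) / fact (n + m)) * norm (mat_pow A (n + m) *v v)"
      using t by (simp add: a_def)
    also have "\<dots> \<le> (t ^ (n + m) / fact (n + m)) * (K ^ (n + m) * l1norm v)"
    proof (rule mult_left_mono)
      have "norm (mat_pow A (n + m) *v v) \<le> mat_l1norm A ^ (n + m) * l1norm v"
        by (rule norm_mat_pow_mult_vec_le)
      also have "\<dots> \<le> K ^ (n + m) * l1norm v"
        by (intro mult_right_mono power_mono K mat_l1norm_nonneg l1norm_nonneg)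
      finally show "norm (mat_pow A (n + m) *v v) \<le> K ^ (n + m) * l1norm v" .
    qed (use t in simp)
    also have "\<dots> = t ^ m * t ^ n * (K ^ m * K ^ n / fact (n + m)) * l1norm v"
      by (simp add: power_add mult_ac)
    also have "\<dots> \<le> t ^ m * 1 * (K ^ m * K ^ n / fact n) * l1norm v"
      using t K0 by (intro mult_right_mono mult_mono divide_left_mono l1norm_nonneg)
        (simp_all add: power_le_one fact_mono)
    finally show ?thesis by (simp add: mult_ac)
  qed
  have majorant: "(\<lambda>n. (t ^ m * K ^ m * l1norm v) * (K ^ n / fact n)) sums (t ^ m * K ^ m * l1norm v * exp K)"
    by (rule sums_mult[OF exp_series_sums])
  have "mat_exp (t *\<^sub>R A) *v v - (\<Sum>n<m. a n) = (\<Sum>n. a (n + m))"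
    using suminf_split_initial_segment[OF sums_summable, of a _ m] mat_exp_mult_vec_sums[of t A v]
    unfolding a_def by (simp add: sums_iff)
  also have "norm \<dots> \<le> (\<Sum>n. (t ^ m * K ^ m * l1norm v) * (K ^ n / fact n))"
    by (rule norm_suminf_le[OF a_le sums_summable[OF majorant]])
  also have "\<dots> = t ^ m * K ^ m * l1norm v * exp K"
    by (rule sums_unique[OF majorant, symmetric])
  finally show ?thesis unfolding a_def .
qed

lemma continuous_on_mat_exp_mult_vec: "continuous_on {0..1} (\<lambda>t. mat_exp (t *\<^sub>R A) *v v)"
proof -
  let ?a = "\<lambda>n t. (t ^ n / fact n) *\<^sub>R (mat_pow A n *v v)"
  have unif: "uniform_limit {0..1} (\<lambda>N t. \<Sum>n<N. ?a n t) (\<lambda>t. \<Sum>n. ?a n t) sequentially"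
  proof (rule Weierstrass_m_test)
    fix n and t :: real assume t: "t \<in> {0..1}"
    have "norm (?a n t) = (t ^ n / fact n) * norm (mat_pow A n *v v)" using t by simp
    also have "\<dots> \<le> (1 / fact n) * (mat_l1norm A ^ n * l1norm v)"
      using t norm_mat_pow_mult_vec_le by (intro mult_mono) (auto simp: divide_right_mono power_le_one)
    finally show "norm (?a n t) \<le> (mat_l1norm A ^ n / fact n) * l1norm v" by simp
  qed (rule summable_mult2, rule sums_summable[OF exp_series_sums])
  have "continuous_on {0..1} (\<lambda>t. \<Sum>n. ?a n t)"
    by (rule uniform_limit_theorem[OF _ unif]) (auto intro!: always_eventually continuous_intros)
  then show ?thesis
    by (simp only: sums_unique[OF mat_exp_mult_vec_sums, symmetric])
qed

lemma integral_mat_exp_mult_vec_remainder: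
  assumes t: "0 \<le> t" "t \<le> 1" and K: "mat_l1norm A \<le> K"
  shows "norm (integral {0..t} (\<lambda>s. mat_exp (s *\<^sub>R A) *v v) - t *\<^sub>R v) \<le> t\<^sup>2 * K * l1norm v * exp K"
proof -
  have cont: "continuous_on {0..t} (\<lambda>s. mat_exp (s *\<^sub>R A) *v v)"
    by (rule continuous_on_subset[OF continuous_on_mat_exp_mult_vec]) (use t in auto)
  have "integral {0..t} (\<lambda>s. mat_exp (s *\<^sub>R A) *v v) - t *\<^sub>R v
          = integral {0..t} (\<lambda>s. mat_exp (s *\<^sub>R A) *v v - v)"
    using t integral_diff[OF integrable_continuous_interval[OF cont] integrable_const_ivl] by simp
  also have "norm \<dots> \<le> (t * K * l1norm v * exp K) * (t - 0)"
  proof (rule integral_bound)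
    fix s assume s: "s \<in> {0..t}"
    have "norm (mat_exp (s *\<^sub>R A) *v v - v) \<le> s * K * l1norm v * exp K"
      using mat_exp_mult_vec_remainder[of s A K v 1] s t K by simp
    also have "\<dots> \<le> t * K * l1norm v * exp K"
      using s K mat_l1norm_nonneg[of A] l1norm_nonneg[of v] by (intro mult_right_mono) auto
    finally show "norm (mat_exp (s *\<^sub>R A) *v v - v) \<le> t * K * l1norm v * exp K" .
  qed (use t cont in \<open>auto intro: continuous_intros\<close>)
  finally show ?thesis by (simp add: power2_eq_square mult_ac)
qed

lemma S_q_remainder:
  assumes s: "0 \<le> s" "s \<le> 1" and K: "mat_l1norm A \<le> K"
  shows "norm (S_q A b s w - w - s *\<^sub>R (A *v w + b)) \<le> s\<^sup>2 * (K\<^sup>2 * l1norm w + K * l1norm b) * exp K"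
proof -
  have "S_q A b s w - w - s *\<^sub>R (A *v w + b)
          = (mat_exp (s *\<^sub>R A) *v w - (\<Sum>n<2. (s ^ n / fact n) *\<^sub>R (mat_pow A n *v w)))
            + (integral {0..s} (\<lambda>r. mat_exp (r *\<^sub>R A) *v b) - s *\<^sub>R b)"
    by (simp add: S_q_def numeral_2_eq_2 algebra_simps)
  also have "norm \<dots> \<le> s\<^sup>2 * K\<^sup>2 * l1norm w * exp K + s\<^sup>2 * K * l1norm b * exp K"
    using mat_exp_mult_vec_remainder[OF s K] integral_mat_exp_mult_vec_remainder[OF s K]
    by (intro norm_triangle_le add_mono)
  finally show ?thesis by (simp add: algebra_simps)
qed

section \<open>Partitions and the Nisio semigroup\<close>

lemma vsup_component: "vsup A g $ i = (SUP a\<in>A. g a $ i)"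
  unfolding vsup_def by simp

definition E_steps :: "(real ^ 'd ^ 'd) set \<Rightarrow> (real ^ 'd ^ 'd \<Rightarrow> real ^ 'd) \<Rightarrow> real list \<Rightarrow> real ^ 'd \<Rightarrow> real ^ 'd" where
  "E_steps P f hs = foldr (\<lambda>h g. E_h P f h \<circ> g) hs id"

lemma E_steps_Nil [simp]: "E_steps P f [] u = u"
  by (simp add: E_steps_def)

lemma E_steps_Cons [simp]: "E_steps P f (h # hs) u = E_h P f h (E_steps P f hs u)"
  by (simp add: E_steps_def)

lemma sorted_le_last: "sorted xs \<Longrightarrow> x \<in> set xs \<Longrightarrow> x \<le> last xs"
  by (induction xs) (auto simp: last_in_set)

lemma sorted_successive_differences:
  assumes "sorted xs" "xs \<noteq> []"
  shows "(\<forall>d\<in>set (map2 (\<lambda>a b. b - a) xs (tl xs)). 0 \<le> d)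
    \<and> sum_list (map2 (\<lambda>a b. b - a) xs (tl xs)) = last xs - hd (xs :: real list)"
  using assms by (induction xs rule: induct_list012) auto

lemma E_part_eq_E_steps:
  assumes "\<pi> \<in> partitions_upto h" "0 < h"
  obtains hs where "E_part P f \<pi> = E_steps P f hs" "\<forall>s\<in>set hs. 0 \<le> s" "sum_list hs = h"
proof -
  have fin: "finite \<pi>" and "0 \<in> \<pi>" "\<forall>s\<in>\<pi>. 0 \<le> s" and Max: "Max \<pi> = h"
    using assms(1) unfolding partitions_upto_def by auto
  then have Min: "Min \<pi> = 0" by (intro Min_eqI) auto
  define ts where "ts = sorted_list_of_set \<pi>"
  have sorted: "sorted ts" and set: "set ts = \<pi>" using fin by (auto simp: ts_def)
  have ts_ne: "ts \<noteq> []" and hd: "hd ts = 0"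
    using sorted_list_of_set_nonempty[OF fin] Min \<open>0 \<in> \<pi>\<close> unfolding ts_def by force+
  have "\<pi> \<noteq> {0}" using Max assms(2) by auto
  have "last ts = Max \<pi>"
    using fin ts_ne set sorted_le_last[OF sorted] by (intro Max_eqI[symmetric]) auto
  then show ?thesis
    using that[of "map2 (\<lambda>a b. b - a) ts (tl ts)"] sorted_successive_differences[OF sorted ts_ne]
      \<open>\<pi> \<noteq> {0}\<close> hd Max
    by (auto simp: E_part_def E_steps_def ts_def Let_def fun_eq_iff)
qed

lemma E_part_pair: "0 < h \<Longrightarrow> E_part P f {0, h} = E_h P f h"
  by (simp add: E_part_def Let_def fun_eq_iff)

lemma pair_in_partitions_upto: "0 < h \<Longrightarrow> {0, h} \<in> partitions_upto h"
  unfolding partitions_upto_def by auto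

lemma E_h_le_nisio:
  assumes "0 < h" "bdd_above ((\<lambda>\<pi>. E_part P f \<pi> u $ i) ` partitions_upto h)"
  shows "E_h P f h u $ i \<le> nisio P f h u $ i"
  using cSUP_upper[OF pair_in_partitions_upto assms(2)] assms(1)
  by (simp add: nisio_def vsup_component E_part_pair)

section \<open>Uniform expansion for bounded controls\<close>

locale bounded_controls =
  fixes P :: "(real ^ 'd ^ 'd) set" and f :: "real ^ 'd ^ 'd \<Rightarrow> real ^ 'd" and K F :: real
  assumes nonempty: "P \<noteq> {}"
    and mat_bound: "q \<in> P \<Longrightarrow> mat_l1norm q \<le> K"
    and f_bound: "q \<in> P \<Longrightarrow> l1norm (f q) \<le> F"
begin

lemma K_nonneg: "0 \<le> K" and F_nonneg: "0 \<le> F"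
  using nonempty mat_bound f_bound mat_l1norm_nonneg l1norm_nonneg by (meson ex_in_conv order_trans)+

definition remainder_bound :: "real \<Rightarrow> real" where
  "remainder_bound R = (K\<^sup>2 * R + K * F) * exp K"

lemma remainder_bound_nonneg: "0 \<le> R \<Longrightarrow> 0 \<le> remainder_bound R"
  unfolding remainder_bound_def using K_nonneg F_nonneg by simp

definition step_bound :: "real \<Rightarrow> real" where
  "step_bound R = K * R + F + remainder_bound R"

lemma S_q_component_remainder:
  assumes "q \<in> P" "0 \<le> s" "s \<le> 1" "l1norm w \<le> R"
  shows "\<bar>S_q q (f q) s w $ i - w $ i - s * (q *v w + f q) $ i\<bar> \<le> s\<^sup>2 * remainder_bound R"
proof -
  have "\<bar>(S_q q (f q) s w - w - s *\<^sub>R (q *v w + f q)) $ i\<bar> \<le> s\<^sup>2 * (K\<^sup>2 * l1norm w + K * l1norm (f q)) * exp K"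
    using component_le_norm_cart S_q_remainder[OF assms(2,3) mat_bound[OF assms(1)]] by (rule order_trans)
  also have "\<dots> \<le> s\<^sup>2 * remainder_bound R"
    unfolding remainder_bound_def mult.assoc[symmetric]
    using assms K_nonneg f_bound by (intro mult_right_mono mult_left_mono add_mono) auto
  finally show ?thesis by simp
qed

lemma mult_vec_component_le: "q \<in> P \<Longrightarrow> \<bar>(q *v w) $ i\<bar> \<le> K * l1norm w"
  using abs_component_le_l1norm l1norm_mult_vec mat_bound l1norm_nonneg
  by (meson mult_right_mono order_trans)

lemma generator_component_le: "q \<in> P \<Longrightarrow> \<bar>(q *v w + f q) $ i\<bar> \<le> K * l1norm w + F"
  using mult_vec_component_le[of q w i] abs_component_le_l1norm[of "f q" i] f_bound[of q] by simp

lemma genQ_component_ge: "q \<in> P \<Longrightarrow> (q *v w + f q) $ i \<le> genQ P f w $ i"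
  unfolding genQ_def vsup_component
  using generator_component_le abs_le_iff by (intro cSUP_upper bdd_aboveI2) blast+

lemma S_q_component_dist:
  assumes "q \<in> P" "0 \<le> s" "s \<le> 1" "l1norm w \<le> R"
  shows "\<bar>S_q q (f q) s w $ i - w $ i\<bar> \<le> s * step_bound R"
proof -
  have R: "0 \<le> R" using assms(4) l1norm_nonneg order_trans by blast
  have "\<bar>(q *v w + f q) $ i\<bar> \<le> K * R + F"
    using generator_component_le[OF assms(1), of w i] mult_left_mono[OF assms(4) K_nonneg]
    by linarith
  then have "\<bar>s * (q *v w + f q) $ i\<bar> \<le> s * (K * R + F)"
    using assms(2) by (simp add: abs_mult mult_left_mono)
  moreover have "s\<^sup>2 * remainder_bound R \<le> s * remainder_bound R"
    using assms(2,3) remainder_bound_nonneg[OF R]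
    by (intro mult_right_mono) (auto simp: power2_eq_square mult_left_le_one_le)
  moreover note S_q_component_remainder[OF assms, of i]
  ultimately show ?thesis
    by (simp add: step_bound_def distrib_left)
qed

lemma bdd_above_S_q_component:
  assumes "0 \<le> s" "s \<le> 1"
  shows "bdd_above ((\<lambda>q. S_q q (f q) s w $ i) ` P)"
proof (rule bdd_aboveI2)
  fix q assume "q \<in> P"
  from S_q_component_dist[OF this assms order_refl, of w i]
  show "S_q q (f q) s w $ i \<le> w $ i + s * step_bound (l1norm w)"
    by (simp add: abs_le_iff)
qed

lemma S_q_component_le_E_h:
  assumes "q \<in> P" "0 \<le> s" "s \<le> 1"
  shows "S_q q (f q) s w $ i \<le> E_h P f s w $ i"
  unfolding E_h_def vsup_component using assms(1) bdd_above_S_q_component[OF assms(2,3)]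
  by (rule cSUP_upper)

lemma E_h_component_dist:
  assumes "0 \<le> s" "s \<le> 1" "l1norm w \<le> R"
  shows "\<bar>E_h P f s w $ i - w $ i\<bar> \<le> s * step_bound R"
proof -
  have near: "\<bar>S_q q (f q) s w $ i - w $ i\<bar> \<le> s * step_bound R" if "q \<in> P" for q
    using S_q_component_dist[OF that assms] .
  obtain q where q: "q \<in> P" using nonempty by blast
  have "E_h P f s w $ i \<le> w $ i + s * step_bound R"
    unfolding E_h_def vsup_component using near nonempty by (intro cSUP_least) (force simp: abs_le_iff)+
  moreover have "w $ i - s * step_bound R \<le> E_h P f s w $ i"
    using near[OF q] S_q_component_le_E_h[OF q assms(1,2), of w i] by (simp add: abs_le_iff)
  ultimately show ?thesis by (simp add: abs_le_iff)
qed

lemma E_h_component_le: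
  assumes "0 \<le> s" "s \<le> 1" "l1norm w \<le> R"
  shows "E_h P f s w $ i \<le> w $ i + s * (genQ P f u $ i + K * l1norm (w - u)) + s\<^sup>2 * remainder_bound R"
  unfolding E_h_def vsup_component
proof (rule cSUP_least[OF nonempty])
  fix q assume q: "q \<in> P"
  have "(q *v w + f q) $ i = (q *v u + f q) $ i + (q *v (w - u)) $ i"
    by (simp add: matrix_vector_mult_def sum_subtractf right_diff_distrib)
  also have "\<dots> \<le> genQ P f u $ i + K * l1norm (w - u)"
    using genQ_component_ge[OF q] mult_vec_component_le[OF q] by (intro add_mono) (auto simp: abs_le_iff)
  finally have "s * (q *v w + f q) $ i \<le> s * (genQ P f u $ i + K * l1norm (w - u))"
    using assms(1) by (rule mult_left_mono)
  then show "S_q q (f q) s w $ i \<le> w $ i + s * (genQ P f u $ i + K * l1norm (w - u)) + s\<^sup>2 * remainder_bound R"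
    using S_q_component_remainder[OF q assms, of i] by (simp add: abs_le_iff)
qed

lemma E_h_step_bound:
  assumes M: "0 \<le> M" "real CARD('d) * step_bound R \<le> M" and C: "K * M + remainder_bound R \<le> C"
    and s: "0 \<le> s" "s \<le> 1" and t: "0 \<le> t" and wR: "l1norm w \<le> R"
    and w: "\<And>i. w $ i \<le> u $ i + t * genQ P f u $ i + C * t\<^sup>2" "l1norm (w - u) \<le> M * t"
  shows "(\<forall>i. E_h P f s w $ i \<le> u $ i + (s + t) * genQ P f u $ i + C * (s + t)\<^sup>2)
    \<and> l1norm (E_h P f s w - u) \<le> M * (s + t)"
proof (intro conjI allI)
  have R: "0 \<le> R" using wR l1norm_nonneg order_trans by blast
  have KM: "0 \<le> K * M" using K_nonneg M(1) by simp
  fix i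
  have "s * (K * l1norm (w - u)) \<le> s * (K * (M * t))"
    using w(2) K_nonneg s by (intro mult_left_mono) auto
  also have "\<dots> \<le> C * (s * t)"
    using C remainder_bound_nonneg[OF R] s t mult_right_mono[of "K * M" C "s * t"] by (simp add: mult_ac)
  finally have drift: "s * (K * l1norm (w - u)) \<le> C * (s * t)" .
  have "s\<^sup>2 * remainder_bound R \<le> C * s\<^sup>2"
    using C KM by (subst mult.commute) (simp add: mult_right_mono)
  moreover have "C * (s + t)\<^sup>2 = C * t\<^sup>2 + 2 * (C * (s * t)) + C * s\<^sup>2"
    by (simp add: power2_eq_square algebra_simps)
  moreover have "0 \<le> C * (s * t)"
    using C KM remainder_bound_nonneg[OF R] s t by simp
  ultimately show "E_h P f s w $ i \<le> u $ i + (s + t) * genQ P f u $ i + C * (s + t)\<^sup>2"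
    using E_h_component_le[OF s wR, of i u] w(1)[of i] drift by (simp add: distrib_left distrib_right)
next
  have "l1norm (E_h P f s w - w) \<le> (\<Sum>i\<in>(UNIV::'d set). s * step_bound R)"
    unfolding l1norm_def using E_h_component_dist[OF s wR] by (intro sum_mono) simp
  also have "\<dots> \<le> s * M"
    using M(2) s by (simp add: mult.left_commute mult_left_mono)
  finally show "l1norm (E_h P f s w - u) \<le> M * (s + t)"
    using l1norm_triangle[of "E_h P f s w - w" "w - u"] w(2) by (simp add: algebra_simps)
qed

lemma E_steps_bound:
  assumes h0: "h0 \<le> 1" and M: "0 \<le> M" "real CARD('d) * step_bound R \<le> M"
    and R: "l1norm u + M * h0 \<le> R" and C: "K * M + remainder_bound R \<le> C"
    and hs: "\<forall>s\<in>set hs. 0 \<le> s" "sum_list hs \<le> h0"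
  shows "(\<forall>i. E_steps P f hs u $ i \<le> u $ i + sum_list hs * genQ P f u $ i + C * (sum_list hs)\<^sup>2)
    \<and> l1norm (E_steps P f hs u - u) \<le> M * sum_list hs"
  using hs
proof (induction hs)
  case Nil
  then show ?case by (simp add: l1norm_def)
next
  case (Cons s hs)
  define t where "t = sum_list hs"
  define w where "w = E_steps P f hs u"
  have s: "0 \<le> s" and t: "0 \<le> t" and st: "s + t \<le> h0"
    using Cons.prems by (auto simp: t_def sum_list_nonneg)
  have IH: "w $ i \<le> u $ i + t * genQ P f u $ i + C * t\<^sup>2" "l1norm (w - u) \<le> M * t" for i
    using Cons.IH Cons.prems st s by (auto simp: t_def w_def)
  have "l1norm w \<le> l1norm u + l1norm (w - u)"
    using l1norm_triangle[of u "w - u"] by simp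
  also have "\<dots> \<le> R"
    using IH(2) mult_left_mono[of t h0 M] M(1) st s R by linarith
  finally have "l1norm w \<le> R" .
  with E_h_step_bound[OF M C s _ t _ IH] st t h0 show ?case
    by (simp add: t_def w_def)
qed

lemma E_part_component_le:
  assumes h0: "h0 \<le> 1" and M: "0 \<le> M" "real CARD('d) * step_bound R \<le> M"
    and R: "l1norm u + M * h0 \<le> R" and C: "K * M + remainder_bound R \<le> C"
    and h: "0 < h" "h \<le> h0" and \<pi>: "\<pi> \<in> partitions_upto h"
  shows "E_part P f \<pi> u $ i \<le> u $ i + h * genQ P f u $ i + C * h\<^sup>2"
proof -
  obtain hs where hs: "E_part P f \<pi> = E_steps P f hs" "\<forall>s\<in>set hs. 0 \<le> s" "sum_list hs = h"
    using E_part_eq_E_steps[OF \<pi> h(1)] by metis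
  then show ?thesis using E_steps_bound[OF h0 M R C hs(2)] h(2) by simp
qed

lemma genQ_component_le_nisio_quotient:
  assumes h: "0 < h" "h \<le> 1" and R: "l1norm u \<le> R"
    and bdd: "bdd_above ((\<lambda>\<pi>. E_part P f \<pi> u $ i) ` partitions_upto h)"
  shows "genQ P f u $ i \<le> (nisio P f h u $ i - u $ i) / h + h * remainder_bound R"
  unfolding genQ_def vsup_component
proof (rule cSUP_least[OF nonempty])
  fix q assume q: "q \<in> P"
  have "S_q q (f q) h u $ i \<le> nisio P f h u $ i"
    using S_q_component_le_E_h[OF q less_imp_le[OF h(1)] h(2)] E_h_le_nisio[OF h(1) bdd]
    by (rule order_trans)
  then have "h * (q *v u + f q) $ i \<le> (nisio P f h u $ i - u $ i) + h * (h * remainder_bound R)"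
    using S_q_component_remainder[OF q less_imp_le[OF h(1)] h(2) R, of i]
    by (simp add: abs_le_iff power2_eq_square algebra_simps)
  then show "(q *v u + f q) $ i \<le> (nisio P f h u $ i - u $ i) / h + h * remainder_bound R"
    using h(1) by (simp add: field_simps)
qed

lemma nisio_difference_quotient_bound:
  "\<exists>h0>0. \<exists>C. \<forall>h. 0 < h \<longrightarrow> h \<le> h0 \<longrightarrow>
     norm_inf ((1 / h) *\<^sub>R (nisio P f h u - u) - genQ P f u) \<le> C * h"
proof -
  define R where "R = l1norm u + 1"
  define M where "M = real CARD('d) * step_bound R + 1"
  define C where "C = K * M + remainder_bound R"
  define h0 where "h0 = min 1 (1 / M)"
  have R: "0 \<le> R" "l1norm u \<le> R" unfolding R_def using l1norm_nonneg[of u] by simp_all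
  have M: "0 < M"
    unfolding M_def step_bound_def using K_nonneg F_nonneg remainder_bound_nonneg[OF R(1)] R(1)
    by (intro add_nonneg_pos mult_nonneg_nonneg add_nonneg_nonneg) auto
  have h0: "0 < h0" "h0 \<le> 1" "l1norm u + M * h0 \<le> R"
    using M by (auto simp: h0_def R_def min_def field_simps)
  have rem_le_C: "remainder_bound R \<le> C" unfolding C_def using K_nonneg M by simp
  have "\<bar>((1 / h) *\<^sub>R (nisio P f h u - u) - genQ P f u) $ i\<bar> \<le> C * h"
    if h: "0 < h" "h \<le> h0" for h i
  proof -
    have part: "E_part P f \<pi> u $ i \<le> u $ i + h * genQ P f u $ i + C * h\<^sup>2"
      if "\<pi> \<in> partitions_upto h" for \<pi>
      using E_part_component_le[OF h0(2) less_imp_le[OF M] _ h0(3) _ h that] by (simp add: M_def C_def)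
    have "nisio P f h u $ i \<le> u $ i + h * genQ P f u $ i + C * h\<^sup>2"
      unfolding nisio_def vsup_component using pair_in_partitions_upto[OF h(1)] part
      by (intro cSUP_least) auto
    then have "(nisio P f h u $ i - u $ i) / h \<le> genQ P f u $ i + C * h"
      using h(1) by (simp add: divide_le_eq power2_eq_square algebra_simps)
    moreover have "genQ P f u $ i \<le> (nisio P f h u $ i - u $ i) / h + h * remainder_bound R"
      using part h h0 R(2) by (intro genQ_component_le_nisio_quotient bdd_aboveI2) auto
    moreover have "h * remainder_bound R \<le> C * h"
      using rem_le_C h(1) by (simp add: mult.commute)
    ultimately show ?thesis by (simp add: abs_le_iff diff_divide_distrib)
  qed
  then show ?thesis using h0(1) by (blast intro: norm_inf_le)
qed

end

lemma bounded_controlsI: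
  assumes P: "P \<noteq> {}"
    and Q: "\<forall>u i. bdd_above ((\<lambda>q. (q *v u + f q) $ i) ` P)"
    and f: "bdd_above ((\<lambda>q. norm_inf (f q)) ` P)"
  shows "\<exists>K F. bounded_controls P f K F"
proof -
  obtain Fb where Fb: "\<And>q. q \<in> P \<Longrightarrow> norm_inf (f q) \<le> Fb"
    using f by (auto simp: bdd_above_def)
  have f_comp: "\<bar>f q $ i\<bar> \<le> Fb" if "q \<in> P" for q i
    using abs_component_le_norm_inf Fb[OF that] by (rule order_trans)
  have "\<exists>B. \<forall>q\<in>P. \<bar>q $ i $ j\<bar> \<le> B" for i j
  proof -
    \<comment> \<open>Testing Q on \<plusminus>e_j bounds q_ij from both sides, since f is bounded.\<close>
    have col: "(q *v axis j c) $ i = c * q $ i $ j" for q :: "real ^ 'a ^ 'a" and c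
      by (simp add: matrix_vector_mult_def axis_def if_distrib cong: if_cong)
    obtain U1 where U1: "\<forall>q\<in>P. (q *v axis j 1 + f q) $ i \<le> U1"
      using Q[rule_format, of "axis j 1" i] by (auto simp: bdd_above_def)
    obtain U2 where U2: "\<forall>q\<in>P. (q *v axis j (-1) + f q) $ i \<le> U2"
      using Q[rule_format, of "axis j (-1)" i] by (auto simp: bdd_above_def)
    have "\<bar>q $ i $ j\<bar> \<le> max U1 U2 + Fb" if "q \<in> P" for q
      using U1 U2 f_comp[OF that, of i] col[of q] that by (auto simp: abs_le_iff)
    then show ?thesis by blast
  qed
  then obtain B where B: "\<And>i j q. q \<in> P \<Longrightarrow> \<bar>q $ i $ j\<bar> \<le> B i j" by metis
  have "mat_l1norm q \<le> (\<Sum>i\<in>UNIV. \<Sum>j\<in>UNIV. B i j)" if "q \<in> P" for q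
    unfolding mat_l1norm_def using B[OF that] by (intro sum_mono)
  moreover have "l1norm (f q) \<le> real CARD('a) * Fb" if "q \<in> P" for q
    using l1norm_le_card_norm_inf[of "f q"] Fb[OF that] by (simp add: order_trans mult_left_mono)
  ultimately show ?thesis using P unfolding bounded_controls_def by blast
qed

theorem mainTheorem11:
  fixes P :: "(real ^ 'd ^ 'd) set" and f :: "real ^ 'd ^ 'd \<Rightarrow> real ^ 'd" and u0 :: "real ^ 'd"
  assumes Qmat: "\<forall>q\<in>P. is_Q_matrix q"
    and q0: "\<exists>q0\<in>P. f q0 = 0 \<and> (\<forall>q\<in>P. \<forall>i. f q $ i \<le> f q0 $ i)"
    and Qfinite: "\<forall>u i. bdd_above ((\<lambda>q. (q *v u + f q) $ i) ` P)"
    and fbdd: "bdd_above ((\<lambda>q. norm_inf (f q)) ` P)"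
  shows "((\<lambda>h. norm_inf ((1 / h) *\<^sub>R (nisio P f h u0 - u0) - genQ P f u0)) \<longlongrightarrow> 0) (at_right 0)"
proof -
  have "P \<noteq> {}" using q0 by blast
  then obtain K F where "bounded_controls P f K F"
    using bounded_controlsI Qfinite fbdd by blast
  from bounded_controls.nisio_difference_quotient_bound[OF this, of u0]
  obtain h0 C where "0 < h0" and bound: "\<And>h. 0 < h \<Longrightarrow> h \<le> h0 \<Longrightarrow>
      norm_inf ((1 / h) *\<^sub>R (nisio P f h u0 - u0) - genQ P f u0) \<le> C * h"
    by blast
  have upper: "\<forall>\<^sub>F h in at_right 0. norm_inf ((1 / h) *\<^sub>R (nisio P f h u0 - u0) - genQ P f u0) \<le> C * h"
    unfolding eventually_at_right_field using \<open>0 < h0\<close> bound by (intro exI[of _ h0]) auto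
  have "((\<lambda>h. C * h) \<longlongrightarrow> 0) (at_right (0::real))"
    using tendsto_mult_right_zero[OF tendsto_ident_at] .
  then show ?thesis
    by (rule tendsto_sandwich[OF always_eventually upper tendsto_const, rotated]) (simp add: norm_inf_nonneg)
qed

end
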